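(* For every graph $G$ and every $\tau\ge1$, $$|Q_{\mathrm{Del\text{-}N}}(G,3\tau)|\le3\cdot|Q_{\mathrm{LP\text{-}Del\text{-}N}}(G,\tau)|.$$
   Context: Graphs are finite, simple, undirected; $\deg(H)$ is the maximum degree; $E(v)$ is the set of edges at $v$. $H\subseteq G$ means $H$ is obtained from $G$ by deleting a set of nodes with all incident edges. $Q_{\mathrm{Del\text{-}N}}(G,t)=-\min\{|V(G)|-|V(G^* )|: G^*\subseteq G,\ \deg(G^* )\le t\}$. $Q_{\mathrm{LP\text{-}Del\text{-}N}}(G,\tau)$ is the optimal value of the LP: maximize $-\sum_{v\in V}x_v$ subject to $y_e\ge1-x_{v'}-x_{v''}$ for every edge $e=(v',v'')$, $\sum_{e\in E(v)}y_e\le\tau$ for every node $v$, and $x_v,y_e\in[0,1]$. *)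

theory Defs
  imports Complex_Main
begin

definition graph :: "'a set \<Rightarrow> 'a set set \<Rightarrow> bool" where
  "graph V E \<longleftrightarrow> finite V \<and> (\<forall>e\<in>E. e \<subseteq> V \<and> card e = 2)"

definition edges_at :: "'a set set \<Rightarrow> 'a \<Rightarrow> 'a set set" where
  "edges_at E v = {e \<in> E. v \<in> e}"

definition max_deg :: "'a set \<Rightarrow> 'a set set \<Rightarrow> nat" where
  "max_deg V E = Max ({card (edges_at E v) | v. v \<in> V} \<union> {0})"

definition induced_edges :: "'a set set \<Rightarrow> 'a set \<Rightarrow> 'a set set" where
  "induced_edges E S = {e \<in> E. e \<subseteq> S}"

definition Q_DelN :: "'a set \<Rightarrow> 'a set set \<Rightarrow> real \<Rightarrow> real" where
  "Q_DelN V E t = - real (Min {card V - card S | S. S \<subseteq> V \<and>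
       real (max_deg S (induced_edges E S)) \<le> t})"

definition lp_feasible ::
  "'a set \<Rightarrow> 'a set set \<Rightarrow> real \<Rightarrow> ('a \<Rightarrow> real) \<Rightarrow> ('a set \<Rightarrow> real) \<Rightarrow> bool" where
  "lp_feasible V E \<tau> x y \<longleftrightarrow>
     (\<forall>v\<in>V. 0 \<le> x v \<and> x v \<le> 1) \<and>
     (\<forall>e\<in>E. 0 \<le> y e \<and> y e \<le> 1) \<and>
     (\<forall>e\<in>E. \<forall>u w. e = {u, w} \<longrightarrow> y e \<ge> 1 - x u - x w) \<and>
     (\<forall>v\<in>V. (\<Sum>e\<in>edges_at E v. y e) \<le> \<tau>)"

text \<open>Optimal value of the LP (maximize the objective; the optimum is attained).\<close>
definition Q_LP_DelN :: "'a set \<Rightarrow> 'a set set \<Rightarrow> real \<Rightarrow> real" where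
  "Q_LP_DelN V E \<tau> = Sup {- (\<Sum>v\<in>V. x v) | x y. lp_feasible V E \<tau> x y}"

end

theory Submission
  imports Defs
begin

text \<open>Round any feasible LP solution: delete every node with \<open>x v \<ge> 1/3\<close>. By Markov's inequality
  at most \<open>3 \<Sum> x\<close> nodes are deleted. An edge between two kept nodes has \<open>y e \<ge> 1 - x u - x w > 1/3\<close>,
  so a kept node, whose incident \<open>y\<close>-weights sum to at most \<open>\<tau>\<close>, keeps at most \<open>3\<tau>\<close> edges.\<close>

lemma graph_finite_edges:
  assumes "graph V E"
  shows "finite E"
proof -
  have "E \<subseteq> Pow V" using assms by (auto simp: graph_def)
  moreover have "finite V" using assms by (simp add: graph_def)
  ultimately show ?thesis by (simp add: finite_subset)
qed

lemma max_deg_le: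
  fixes t :: real
  assumes "finite V" and "0 \<le> t" and "\<And>v. v \<in> V \<Longrightarrow> real (card (edges_at E v)) \<le> t"
  shows "real (max_deg V E) \<le> t"
proof -
  let ?M = "{card (edges_at E v) | v. v \<in> V} \<union> {0}"
  have "Max ?M \<in> ?M" using assms(1) by (intro Max_in) auto
  then show ?thesis using assms(2,3) unfolding max_deg_def by auto
qed

lemma abs_Q_DelN_le_card_deleted:
  assumes "finite V" and "S \<subseteq> V" and "real (max_deg S (induced_edges E S)) \<le> t"
  shows "\<bar>Q_DelN V E t\<bar> \<le> real (card (V - S))"
proof -
  let ?D = "{card V - card S | S. S \<subseteq> V \<and> real (max_deg S (induced_edges E S)) \<le> t}"
  have "finite ?D" by (rule finite_subset[of _ "{0..card V}"]) auto
  moreover have "card V - card S \<in> ?D" using assms(2,3) by blast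
  ultimately have "Min ?D \<le> card (V - S)"
    using assms(1,2) by (simp add: card_Diff_subset finite_subset)
  then show ?thesis unfolding Q_DelN_def by simp
qed

lemma markov_card_le_sum:
  fixes x :: "'a \<Rightarrow> real"
  assumes "finite V" and "\<And>v. v \<in> V \<Longrightarrow> 0 \<le> x v"
  shows "c * real (card {v \<in> V. c \<le> x v}) \<le> (\<Sum>v\<in>V. x v)"
proof -
  have "c * real (card {v \<in> V. c \<le> x v}) \<le> (\<Sum>v\<in>{v \<in> V. c \<le> x v}. x v)"
    using sum_bounded_below[of "{v \<in> V. c \<le> x v}" c x] by (simp add: mult.commute)
  also have "\<dots> \<le> (\<Sum>v\<in>V. x v)" using assms by (intro sum_mono2) auto
  finally show ?thesis .
qed

lemma lp_feasible_edge_between_light_nodes: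
  assumes "graph V E" and "lp_feasible V E \<tau> x y" and "e \<in> E"
    and "\<And>v. v \<in> e \<Longrightarrow> x v < 1/3"
  shows "1/3 < y e"
proof -
  obtain u w where e: "e = {u, w}"
    using assms(1,3) by (auto simp: graph_def card_2_iff)
  then have "1 - x u - x w \<le> y e" using assms(2,3) by (auto simp: lp_feasible_def)
  moreover have "x u < 1/3" "x w < 1/3" using assms(4) e by auto
  ultimately show ?thesis by linarith
qed

lemma lp_feasible_light_nodes_max_deg:
  assumes "graph V E" and "lp_feasible V E \<tau> x y" and "0 \<le> \<tau>"
  defines "K \<equiv> {v \<in> V. x v < 1/3}"
  shows "real (max_deg K (induced_edges E K)) \<le> 3 * \<tau>"
proof (rule max_deg_le)
  show "finite K" using assms(1) by (simp add: graph_def K_def)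
  show "0 \<le> 3 * \<tau>" using assms(3) by simp
next
  fix v assume "v \<in> K"
  let ?A = "edges_at (induced_edges E K) v"
  have heavy: "1/3 < y e" if "e \<in> ?A" for e
    using that by (intro lp_feasible_edge_between_light_nodes[OF assms(1,2)])
      (auto simp: edges_at_def induced_edges_def K_def)
  have "real (card ?A) * (1/3) \<le> (\<Sum>e\<in>?A. y e)"
    using heavy by (intro sum_bounded_below) (simp add: less_imp_le)
  also have "\<dots> \<le> (\<Sum>e\<in>edges_at E v. y e)"
    using graph_finite_edges[OF assms(1)] assms(2)
    by (intro sum_mono2) (auto simp: edges_at_def induced_edges_def lp_feasible_def)
  also have "\<dots> \<le> \<tau>" using assms(2) \<open>v \<in> K\<close> by (simp add: lp_feasible_def K_def)
  finally show "real (card ?A) \<le> 3 * \<tau>" by simp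
qed

lemma abs_Q_DelN_le_lp_objective:
  assumes "graph V E" and "lp_feasible V E \<tau> x y" and "0 \<le> \<tau>"
  shows "\<bar>Q_DelN V E (3 * \<tau>)\<bar> \<le> 3 * (\<Sum>v\<in>V. x v)"
proof -
  let ?K = "{v \<in> V. x v < 1/3}"
  have finV: "finite V" using assms(1) by (simp add: graph_def)
  have "\<bar>Q_DelN V E (3 * \<tau>)\<bar> \<le> real (card (V - ?K))"
    using lp_feasible_light_nodes_max_deg[OF assms]
    by (intro abs_Q_DelN_le_card_deleted[OF finV]) auto
  also have "V - ?K = {v \<in> V. 1/3 \<le> x v}" by auto
  also have "real (card \<dots>) \<le> 3 * (\<Sum>v\<in>V. x v)"
    using markov_card_le_sum[OF finV, of x "1/3"] assms(2) by (simp add: lp_feasible_def)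
  finally show ?thesis .
qed

lemma abs_Q_LP_DelN_ge:
  assumes "0 \<le> \<tau>" and "\<And>x y. lp_feasible V E \<tau> x y \<Longrightarrow> B \<le> (\<Sum>v\<in>V. x v)"
  shows "B \<le> \<bar>Q_LP_DelN V E \<tau>\<bar>"
proof -
  let ?L = "{- (\<Sum>v\<in>V. x v) | x y. lp_feasible V E \<tau> x y}"
  have "lp_feasible V E \<tau> (\<lambda>_. 1) (\<lambda>_. 0)" using assms(1) by (simp add: lp_feasible_def)
  then have "?L \<noteq> {}" by blast
  moreover have "a \<le> - B" if "a \<in> ?L" for a using that assms(2) by force
  ultimately have "Sup ?L \<le> - B" by (rule cSup_least)
  then show ?thesis unfolding Q_LP_DelN_def by linarith
qed

theorem mainTheorem7:
  fixes V :: "'a set" and E :: "'a set set" and \<tau> :: real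
  assumes "graph V E" and "\<tau> \<ge> 1"
  shows "\<bar>Q_DelN V E (3 * \<tau>)\<bar> \<le> 3 * \<bar>Q_LP_DelN V E \<tau>\<bar>"
proof -
  have "\<bar>Q_DelN V E (3 * \<tau>)\<bar> / 3 \<le> \<bar>Q_LP_DelN V E \<tau>\<bar>"
    using assms abs_Q_DelN_le_lp_objective[OF assms(1)]
    by (intro abs_Q_LP_DelN_ge) fastforce+
  then show ?thesis by simp
qed

end
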